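(* Let $\mathcal{C}$ be an $(n,k,d)$ linear MDS code over a finite field $\mathbb{F}_q$ with $d \ge 3$, and set $m = \min\{k, n-k-1\}$. Then $$\rho(\mathcal{C}) \le \binom{n}{d-2} - U(n,d-2,m).$$
   Context: An $(n,k,d)$ linear MDS code is a linear code over $\mathbb{F}_q$ of length $n$, dimension $k$ and minimum Hamming distance $d = n-k+1$. A parity-check matrix for $\mathcal{C}$ is any matrix (possibly with linearly dependent rows) whose rows span $\mathcal{C}^\perp$. For a parity-check matrix $H$, the stopping distance $s(H)$ is the largest integer such that for every set of $s(H)-1$ or fewer columns of $H$, the projection of $H$ onto those columns contains at least one row with exactly one nonzero entry. The stopping redundancy $\rho(\mathcal{C})$ is the smallest number of rows of a parity-check matrix $H$ for $\mathcal{C}$ with $s(H) = d$. An $(n,4,w)$ constant-weight code is a set of binary vectors of length $n$ and Hamming weight $w$ any two of which are at Hamming distance at least $4$. $U(n,w,m)$ denotes the largest possible cardinality of a union of $m$ constant-weight codes, each with parameters $(n,4,w)$. *)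

theory Defs
  imports Complex_Main "HOL-Library.Function_Algebras"
begin

text \<open>Words of length n over a field 'a are functions nat => 'a vanishing outside {..<n}.\<close>

definition words :: "nat \<Rightarrow> (nat \<Rightarrow> 'a::field) set" where
  "words n = {x. \<forall>i\<ge>n. x i = 0}"

definition scl :: "'a::field \<Rightarrow> (nat \<Rightarrow> 'a) \<Rightarrow> (nat \<Rightarrow> 'a)" where
  "scl c x = (\<lambda>i. c * x i)"

definition linear_code :: "nat \<Rightarrow> (nat \<Rightarrow> 'a::field) set \<Rightarrow> bool" where
  "linear_code n C \<longleftrightarrow> C \<subseteq> words n \<and> module.subspace scl C"

definition code_dim :: "(nat \<Rightarrow> 'a::field) set \<Rightarrow> nat" where
  "code_dim C = vector_space.dim scl C"

definition hweight :: "nat \<Rightarrow> (nat \<Rightarrow> 'a::zero) \<Rightarrow> nat" where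
  "hweight n x = card {i. i < n \<and> x i \<noteq> 0}"

text \<open>Minimum Hamming distance of a linear code = minimum weight of a nonzero codeword.\<close>
definition min_distance :: "nat \<Rightarrow> (nat \<Rightarrow> 'a::field) set \<Rightarrow> nat" where
  "min_distance n C = Inf {hweight n c | c. c \<in> C \<and> c \<noteq> 0}"

definition dual_code :: "nat \<Rightarrow> (nat \<Rightarrow> 'a::field) set \<Rightarrow> (nat \<Rightarrow> 'a) set" where
  "dual_code n C = {y \<in> words n. \<forall>x\<in>C. (\<Sum>i<n. x i * y i) = 0}"

text \<open>A parity-check matrix with r rows: rows H 0, ..., H (r-1) (possibly dependent)
  whose span is the dual code; entry (row j, column i) is H j i.\<close>
definition parity_check :: "nat \<Rightarrow> (nat \<Rightarrow> 'a::field) set \<Rightarrow> nat \<Rightarrow> (nat \<Rightarrow> nat \<Rightarrow> 'a) \<Rightarrow> bool" where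
  "parity_check n C r H \<longleftrightarrow> module.span scl (H ` {..<r}) = dual_code n C"

definition has_single_row :: "nat \<Rightarrow> (nat \<Rightarrow> nat \<Rightarrow> 'a::zero) \<Rightarrow> nat set \<Rightarrow> bool" where
  "has_single_row r H S \<longleftrightarrow> (\<exists>j<r. card {i \<in> S. H j i \<noteq> 0} = 1)"

definition stopping_distance :: "nat \<Rightarrow> nat \<Rightarrow> (nat \<Rightarrow> nat \<Rightarrow> 'a::zero) \<Rightarrow> nat" where
  "stopping_distance n r H = (GREATEST s. \<forall>S. S \<subseteq> {..<n} \<and> S \<noteq> {} \<and> card S \<le> s - 1
        \<longrightarrow> has_single_row r H S)"

definition stopping_redundancy :: "nat \<Rightarrow> (nat \<Rightarrow> 'a::field) set \<Rightarrow> nat" where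
  "stopping_redundancy n C = (LEAST r. \<exists>H. parity_check n C r H \<and>
        stopping_distance n r H = min_distance n C)"

text \<open>Binary vectors of length n are identified with their supports (subsets of {..<n}).\<close>
definition cw_code :: "nat \<Rightarrow> nat \<Rightarrow> nat set set \<Rightarrow> bool" where
  "cw_code n w A \<longleftrightarrow> (\<forall>x\<in>A. x \<subseteq> {..<n} \<and> card x = w) \<and>
     (\<forall>x\<in>A. \<forall>y\<in>A. x \<noteq> y \<longrightarrow> card ((x - y) \<union> (y - x)) \<ge> 4)"

definition U :: "nat \<Rightarrow> nat \<Rightarrow> nat \<Rightarrow> nat" where
  "U n w m = Max {card (\<Union>i<m. A i) | A. \<forall>i<m. cw_code n w (A i)}"

end

theory Submission
  imports Defs "HOL-Library.FuncSet" "HOL-Library.Cardinality"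
begin

(* Since C is MDS, so is its dual: a nonzero dual codeword has more than k nonzero
   coordinates, and for every set T of d - 2 = n - k - 1 coordinates there is a dual codeword
   dual_word T whose zeros are exactly T.  The rows of the parity-check matrix are the words
   dual_word T for all T outside a union of m = min k (n - k - 1) constant-weight codes of
   distance 4.  Sets that differ in a single element are at distance 2, so each of these codes
   contains at most one member of any family of sets pairwise differing in one element.
   Consequently, as m <= k and m < n - k:
   - if T was deleted, then among the k + 2 sets insert a (T - {t}) at least two are kept, and
     since the dual words vanishing on their n - k - 2 common elements form a plane, dual_word T
     is a combination of the two kept rows; hence the kept rows still span the dual code;
   - every nonempty set S of at most d - 1 columns is contained, up to one element i, in some
     kept T, and then the row dual_word T has exactly one nonzero entry on S, at i.
   The support of a minimum-weight codeword shows that the stopping distance is not larger. *)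

section \<open>Words over a finite field\<close>

interpretation V: vector_space "scl :: 'a::field \<Rightarrow> (nat \<Rightarrow> 'a) \<Rightarrow> _"
  by unfold_locales (auto simp: scl_def fun_eq_iff algebra_simps)

definition supported_on :: "'i set \<Rightarrow> ('i \<Rightarrow> 'a::zero) set" where
  "supported_on J = {x. \<forall>i. i \<notin> J \<longrightarrow> x i = 0}"

lemma words_eq_supported_on: "words n = supported_on {..<n}"
  by (auto simp: words_def supported_on_def)

lemma bij_betw_restrict_supported_on:
  "bij_betw (\<lambda>x. restrict x J) (supported_on J :: ('i \<Rightarrow> 'a::zero) set) (J \<rightarrow>\<^sub>E UNIV)"
  by (rule bij_betw_byWitness[where f'="\<lambda>f i. if i \<in> J then f i else 0"])
    (auto simp: supported_on_def fun_eq_iff PiE_def extensional_def)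

lemma
  assumes "finite J"
  shows finite_supported_on: "finite (supported_on J :: ('i \<Rightarrow> 'a::{zero,finite}) set)"
    and card_supported_on: "card (supported_on J :: ('i \<Rightarrow> 'a) set) = CARD('a) ^ card J"
proof -
  have "finite (J \<rightarrow>\<^sub>E (UNIV :: 'a set))" using assms by (simp add: finite_PiE)
  then show "finite (supported_on J :: ('i \<Rightarrow> 'a) set)"
    using bij_betw_finite bij_betw_restrict_supported_on by blast
  show "card (supported_on J :: ('i \<Rightarrow> 'a) set) = CARD('a) ^ card J"
    using bij_betw_same_card[OF bij_betw_restrict_supported_on, of J] assms
    by (simp add: card_funcsetE)
qed

lemma finite_words: "finite (words n :: (nat \<Rightarrow> 'a::{field,finite}) set)"
  by (simp add: words_eq_supported_on finite_supported_on)

lemma subspace_supported_on: "V.subspace (supported_on J)"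
  by (auto simp: V.subspace_def supported_on_def scl_def)

lemma one_less_card_field: "1 < CARD('a::{field,finite})"
proof -
  have "card {0::'a, 1} \<le> CARD('a)" by (rule card_mono) auto
  then show ?thesis by simp
qed

lemma card_subspace_ge:
  fixes S :: "(nat \<Rightarrow> 'a::{field,finite}) set"
  assumes "V.subspace S" "finite S" "B \<subseteq> S" "V.independent B"
  shows "CARD('a) ^ card B \<le> card S"
proof -
  have "finite B" using assms(2,3) finite_subset by blast
  let ?comb = "\<lambda>f. \<Sum>b\<in>B. scl (f b) b"
  have "inj_on ?comb (B \<rightarrow>\<^sub>E UNIV)"
  proof (rule inj_onI)
    fix f g assume f: "f \<in> B \<rightarrow>\<^sub>E UNIV" and g: "g \<in> B \<rightarrow>\<^sub>E UNIV" and "?comb f = ?comb g"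
    then have "(\<Sum>b\<in>B. scl (f b - g b) b) = 0"
      by (simp add: V.scale_left_diff_distrib sum_subtractf)
    moreover have "\<forall>u. \<not> ((\<exists>b\<in>B. u b \<noteq> 0) \<and> (\<Sum>b\<in>B. scl (u b) b) = 0)"
      using assms(4) V.dependent_finite[OF \<open>finite B\<close>] by simp
    ultimately have "\<forall>b\<in>B. f b - g b = 0" by (auto dest: spec[of _ "\<lambda>b. f b - g b"])
    then show "f = g" by (intro PiE_ext[OF f g]) auto
  qed
  moreover have "?comb ` (B \<rightarrow>\<^sub>E UNIV) \<subseteq> S"
    using assms(1,3) by (auto intro!: V.subspace_sum V.subspace_scale)
  ultimately have "card (B \<rightarrow>\<^sub>E (UNIV :: 'a set)) \<le> card S"
    using card_inj_on_le assms(2) by blast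
  then show ?thesis using \<open>finite B\<close> by (simp add: card_funcsetE)
qed

lemma sum_apply: "(\<Sum>a\<in>A. f a) i = (\<Sum>a\<in>A. f a i)"
  by (induction A rule: infinite_finite_induct) auto

lemma subspace_exists_nonzero_in_kernel:
  fixes f :: "(nat \<Rightarrow> 'a::field) \<Rightarrow> 'b::ab_group_add"
  assumes "V.subspace S" "f ` S \<subseteq> W" "finite W" "card W < card S"
    and "\<And>x y. f (x - y) = f x - f y"
  shows "\<exists>v\<in>S. v \<noteq> 0 \<and> f v = 0"
proof -
  have "\<not> inj_on f S" using assms(2-4) card_inj_on_le by (metis not_le)
  then obtain x y where "x \<in> S" "y \<in> S" "x \<noteq> y" "f x = f y" unfolding inj_on_def by blast
  then show ?thesis using assms(1,5) V.subspace_diff by (intro bexI[of _ "x - y"]) auto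
qed

definition dot :: "nat \<Rightarrow> (nat \<Rightarrow> 'a::field) \<Rightarrow> (nat \<Rightarrow> 'a) \<Rightarrow> 'a" where
  "dot n x y = (\<Sum>i<n. x i * y i)"

lemma dot_commute: "dot n x y = dot n y x"
  by (simp add: dot_def mult.commute)

lemma dot_add_right: "dot n x (y + z) = dot n x y + dot n x z"
  by (simp add: dot_def distrib_left sum.distrib)

lemma dot_diff_right: "dot n x (y - z) = dot n x y - dot n x z"
  by (simp add: dot_def right_diff_distrib sum_subtractf)

lemma dot_scl_right: "dot n x (scl c y) = c * dot n x y"
  by (simp add: dot_def scl_def sum_distrib_left mult.left_commute)

lemma subspace_dot_eq_0: "V.subspace {y. dot n x y = 0}"
  by (simp add: V.subspace_def dot_add_right dot_scl_right) (simp add: dot_def)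

lemma dot_eq_single:
  assumes "j < n" "\<And>i. i < n \<Longrightarrow> i \<noteq> j \<Longrightarrow> x i * y i = 0"
  shows "dot n x y = x j * y j"
proof -
  have "(\<Sum>i\<in>{..<n} - {j}. x i * y i) = 0" using assms(2) by (intro sum.neutral) blast
  then show ?thesis unfolding dot_def using assms(1) by (simp add: sum.remove[of _ j])
qed

lemma mem_dual_code_iff: "y \<in> dual_code n C \<longleftrightarrow> y \<in> words n \<and> (\<forall>x\<in>C. dot n x y = 0)"
  by (simp add: dual_code_def dot_def)

lemma subspace_dual_code: "V.subspace (dual_code n C)"
proof -
  have "dual_code n C = words n \<inter> (\<Inter>x\<in>C. {y. dot n x y = 0})"
    by (auto simp: mem_dual_code_iff)
  then show ?thesis
    by (simp add: V.subspace_inter V.subspace_Int subspace_dot_eq_0 words_eq_supported_on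
        subspace_supported_on)
qed

lemma dot_span_eq_0:
  assumes "\<forall>b\<in>B. dot n b y = 0" "x \<in> V.span B"
  shows "dot n x y = 0"
proof -
  have "V.subspace {x. dot n x y = 0}" using subspace_dot_eq_0[of n y] by (simp add: dot_commute)
  then have "V.span B \<subseteq> {x. dot n x y = 0}" using assms(1) by (intro V.span_minimal) auto
  then show ?thesis using assms(2) by blast
qed

section \<open>Stopping sets\<close>

lemma support_not_has_single_row:
  assumes "\<And>j. j < r \<Longrightarrow> dot n c (H j) = 0"
  shows "\<not> has_single_row r H {i. i < n \<and> c i \<noteq> 0}"
proof
  assume "has_single_row r H {i. i < n \<and> c i \<noteq> 0}"
  then obtain j where j: "j < r" and one: "card {i \<in> {i. i < n \<and> c i \<noteq> 0}. H j i \<noteq> 0} = 1"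
    unfolding has_single_row_def by blast
  from one obtain i0 where i0: "{i \<in> {i. i < n \<and> c i \<noteq> 0}. H j i \<noteq> 0} = {i0}"
    by (rule card_1_singletonE)
  then have "dot n c (H j) = c i0 * H j i0" by (intro dot_eq_single) auto
  moreover have "c i0 \<noteq> 0" "H j i0 \<noteq> 0" using i0 by auto
  ultimately show False using assms[OF j] by simp
qed

lemma min_distance_le_hweight:
  assumes "c \<in> C" "c \<noteq> 0"
  shows "min_distance n C \<le> hweight n c"
  unfolding min_distance_def using assms by (intro wellorder_Inf_le1) auto

lemma Greatest_nat_triv_eq_Inf_empty:
  assumes "\<And>s. P s"
  shows "(GREATEST s::nat. P s) = Inf {}"
proof -
  have "(\<lambda>x. P x \<and> (\<forall>y. P y \<longrightarrow> y \<le> x)) = (\<lambda>x. False)"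
    by (rule ext) (use assms Suc_n_not_le_n in blast)
  then show ?thesis by (simp add: Greatest_def Inf_nat_def Least_def)
qed

lemma le_hweight_if_small_sets_have_single_rows:
  assumes words: "C \<subseteq> words n"
    and rows: "\<And>j c. j < r \<Longrightarrow> c \<in> C \<Longrightarrow> dot n c (H j) = 0"
    and c: "c \<in> C" "c \<noteq> 0"
    and s: "\<forall>S. S \<subseteq> {..<n} \<and> S \<noteq> {} \<and> card S \<le> s - 1 \<longrightarrow> has_single_row r H S"
  shows "s \<le> hweight n c"
proof -
  define S0 where "S0 = {i. i < n \<and> c i \<noteq> 0}"
  have "S0 \<noteq> {}"
  proof
    assume "S0 = {}"
    moreover have "c \<in> words n" using c(1) words by blast
    ultimately have "c i = 0" for i unfolding S0_def words_def by (cases "i < n") auto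
    then show False using c(2) by (simp add: fun_eq_iff)
  qed
  moreover have "S0 \<subseteq> {..<n}" "card S0 = hweight n c" by (auto simp: S0_def hweight_def)
  moreover have "\<not> has_single_row r H S0"
    unfolding S0_def using rows c(1) by (intro support_not_has_single_row)
  ultimately show ?thesis using s by (cases "s \<le> hweight n c") auto
qed

lemma stopping_distance_eq_min_distance:
  assumes words: "C \<subseteq> words n"
    and rows: "\<And>j c. j < r \<Longrightarrow> c \<in> C \<Longrightarrow> dot n c (H j) = 0"
    and single: "\<And>S. S \<subseteq> {..<n} \<Longrightarrow> S \<noteq> {} \<Longrightarrow> \<forall>c\<in>C. c \<noteq> 0 \<longrightarrow> card S < hweight n c
      \<Longrightarrow> has_single_row r H S"
  shows "stopping_distance n r H = min_distance n C"
proof (cases "\<exists>c\<in>C. c \<noteq> 0")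
  case True
  define d where "d = min_distance n C"
  have "d \<in> {hweight n c | c. c \<in> C \<and> c \<noteq> 0}"
    unfolding d_def min_distance_def using True by (intro Inf_nat_def1) auto
  then obtain c0 where c0: "c0 \<in> C" "c0 \<noteq> 0" "hweight n c0 = d" by blast
  have d_le: "d \<le> hweight n c" if "c \<in> C" "c \<noteq> 0" for c
    unfolding d_def using that by (rule min_distance_le_hweight)
  show ?thesis unfolding stopping_distance_def d_def[symmetric]
  proof (rule Greatest_equality)
    show "\<forall>S. S \<subseteq> {..<n} \<and> S \<noteq> {} \<and> card S \<le> d - 1 \<longrightarrow> has_single_row r H S"
    proof (intro allI impI)
      fix S assume S: "S \<subseteq> {..<n} \<and> S \<noteq> {} \<and> card S \<le> d - 1"
      then have "0 < card S" using finite_subset[of S "{..<n}"] by (auto simp: card_gt_0_iff)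
      with S have "card S < d" by linarith
      then have "\<forall>c\<in>C. c \<noteq> 0 \<longrightarrow> card S < hweight n c" using d_le less_le_trans by blast
      with S show "has_single_row r H S" using single by blast
    qed
  next
    fix s assume "\<forall>S. S \<subseteq> {..<n} \<and> S \<noteq> {} \<and> card S \<le> s - 1 \<longrightarrow> has_single_row r H S"
    then show "s \<le> d"
      using le_hweight_if_small_sets_have_single_rows[OF words rows c0(1,2)] c0(3) by simp
  qed
next
  case False
  \<comment> \<open>Then \<open>min_distance n C = Inf {}\<close>, and both sides are the unspecified \<open>THE x::nat. False\<close>.\<close>
  then have no_weights: "{hweight n c | c. c \<in> C \<and> c \<noteq> 0} = {}" by auto
  have "(GREATEST s. \<forall>S. S \<subseteq> {..<n} \<and> S \<noteq> {} \<and> card S \<le> s - 1 \<longrightarrow> has_single_row r H S)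
      = Inf {}"
  proof (rule Greatest_nat_triv_eq_Inf_empty, intro allI impI)
    fix s S assume "S \<subseteq> {..<n} \<and> S \<noteq> {} \<and> card S \<le> s - 1"
    then show "has_single_row r H S" using False single by simp
  qed
  then show ?thesis unfolding stopping_distance_def min_distance_def no_weights .
qed

lemma stopping_redundancy_le_card:
  assumes "C \<subseteq> words n" "finite R" "V.span R = dual_code n C"
    and single: "\<And>S. S \<subseteq> {..<n} \<Longrightarrow> S \<noteq> {} \<Longrightarrow> \<forall>c\<in>C. c \<noteq> 0 \<longrightarrow> card S < hweight n c
      \<Longrightarrow> \<exists>y\<in>R. card {i \<in> S. y i \<noteq> 0} = 1"
  shows "stopping_redundancy n C \<le> card R"
proof -
  obtain H where "bij_betw H {0..<card R} R" using ex_bij_betw_nat_finite[OF assms(2)] by blast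
  then have H: "H ` {..<card R} = R" by (simp add: bij_betw_def atLeast0LessThan)
  then have "parity_check n C (card R) H" using assms(3) by (simp add: parity_check_def)
  moreover have "stopping_distance n (card R) H = min_distance n C"
  proof (rule stopping_distance_eq_min_distance[OF assms(1)])
    fix j c assume "j < card R" "c \<in> C"
    then have "H j \<in> dual_code n C" using H assms(3) V.span_base by blast
    then show "dot n c (H j) = 0" using \<open>c \<in> C\<close> by (simp add: mem_dual_code_iff)
  next
    fix S assume "S \<subseteq> {..<n}" "S \<noteq> {}" "\<forall>c\<in>C. c \<noteq> 0 \<longrightarrow> card S < hweight n c"
    then obtain y where "y \<in> R" "card {i \<in> S. y i \<noteq> 0} = 1" using single by blast
    moreover obtain j where "j < card R" "y = H j" using H \<open>y \<in> R\<close> by blast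
    ultimately show "has_single_row (card R) H S" unfolding has_single_row_def by blast
  qed
  ultimately have
    "\<exists>H. parity_check n C (card R) H \<and> stopping_distance n (card R) H = min_distance n C"
    by blast
  then show ?thesis unfolding stopping_redundancy_def by (rule Least_le)
qed

section \<open>Unions of constant-weight codes\<close>

definition near :: "nat set \<Rightarrow> nat set \<Rightarrow> bool" where
  "near x y \<longleftrightarrow> card (sym_diff x y) < 4"

lemma near_if_sym_diff_subset:
  assumes "sym_diff x y \<subseteq> {a, b}"
  shows "near x y"
proof -
  have "card (sym_diff x y) \<le> card {a, b}" using assms by (intro card_mono) auto
  also have "\<dots> \<le> 2" by (simp add: card_insert_le_m1)
  finally show ?thesis by (simp add: near_def)
qed

lemma pairwise_near_insert: "pairwise near ((\<lambda>a. insert a Z) ` X)"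
proof -
  have "near (insert a Z) (insert b Z)" for a b by (rule near_if_sym_diff_subset[of _ _ a b]) auto
  then show ?thesis by (auto simp: pairwise_def)
qed

lemma pairwise_near_remove: "pairwise near ((\<lambda>i. S - {i}) ` I)"
proof -
  have "near (S - {i}) (S - {j})" for i j by (rule near_if_sym_diff_subset[of _ _ i j]) auto
  then show ?thesis by (auto simp: pairwise_def)
qed

lemma card_Int_UN_cw_codes_le:
  assumes codes: "\<And>i. i < m \<Longrightarrow> cw_code n w (A i)" and "pairwise near F"
  shows "card (F \<inter> (\<Union>i<m. A i)) \<le> m"
proof -
  have le1: "card (F \<inter> A i) \<le> 1" if "i < m" for i
  proof -
    have "A i \<subseteq> Pow {..<n}" using codes[OF that] by (auto simp: cw_code_def)
    then have "finite (F \<inter> A i)" by (meson finite_Int finite_Pow_iff finite_lessThan finite_subset)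
    moreover have "x = y" if "x \<in> F \<inter> A i" "y \<in> F \<inter> A i" for x y
    proof (rule ccontr)
      assume "x \<noteq> y"
      then have "near x y" using that \<open>pairwise near F\<close> unfolding pairwise_def by blast
      moreover have "4 \<le> card (sym_diff x y)" using that \<open>x \<noteq> y\<close> codes[OF \<open>i < m\<close>]
        unfolding cw_code_def by blast
      ultimately show False by (simp add: near_def)
    qed
    ultimately have "card (F \<inter> A i) \<le> Suc 0" using card_le_Suc0_iff_eq by blast
    then show ?thesis by simp
  qed
  have "F \<inter> (\<Union>i<m. A i) = (\<Union>i<m. F \<inter> A i)" by blast
  then have "card (F \<inter> (\<Union>i<m. A i)) \<le> (\<Sum>i<m. card (F \<inter> A i))"
    by (simp only:) (rule card_UN_le, simp)
  also have "\<dots> \<le> (\<Sum>i<m. 1)" using le1 by (intro sum_mono) simp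
  finally show ?thesis by simp
qed

lemma card_Diff_UN_cw_codes_ge:
  assumes "\<And>i. i < m \<Longrightarrow> cw_code n w (A i)" "pairwise near F" "finite F" "m + j \<le> card F"
  shows "j \<le> card (F - (\<Union>i<m. A i))"
proof -
  have "card (F \<inter> (\<Union>i<m. A i)) \<le> m" using assms(1,2) by (rule card_Int_UN_cw_codes_le)
  moreover have "card F = card (F \<inter> (\<Union>i<m. A i)) + card (F - (\<Union>i<m. A i))"
    using assms(3) by (rule card_Int_Diff)
  ultimately show ?thesis using assms(4) by linarith
qed

lemma U_attained: "\<exists>A. (\<forall>i<m. cw_code n w (A i)) \<and> U n w m = card (\<Union>i<m. A i)"
proof -
  define sizes where "sizes = {card (\<Union>i<m. A i) | A. \<forall>i<m. cw_code n w (A i)}"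
  have "sizes \<subseteq> {..card (Pow {..<n})}"
  proof
    fix s assume "s \<in> sizes"
    then obtain A where s: "s = card (\<Union>i<m. A i)" and "\<forall>i<m. cw_code n w (A i)"
      unfolding sizes_def by blast
    then have "(\<Union>i<m. A i) \<subseteq> Pow {..<n}" by (auto simp: cw_code_def)
    then show "s \<in> {..card (Pow {..<n})}" unfolding s by (simp add: card_mono)
  qed
  moreover have "0 \<in> sizes" unfolding sizes_def cw_code_def by (auto intro: exI[of _ "\<lambda>_. {}"])
  ultimately have "Max sizes \<in> sizes" by (intro Max_in) (auto intro: finite_subset)
  then obtain A where "\<forall>i<m. cw_code n w (A i)" "Max sizes = card (\<Union>i<m. A i)"
    unfolding sizes_def by blast
  moreover have "U n w m = Max sizes" unfolding U_def sizes_def ..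
  ultimately show ?thesis by auto
qed

section \<open>Minimum-weight words of the dual of an MDS code\<close>

(* weight_gt is the MDS property d = n - k + 1, in a form that stays meaningful for C = {0},
   where min_distance is unspecified. *)
locale mds_code =
  fixes C :: "(nat \<Rightarrow> 'a::{field,finite}) set" and n k :: nat
  assumes linear: "linear_code n C" and dim: "code_dim C = k"
    and weight_gt: "\<And>c. c \<in> C \<Longrightarrow> c \<noteq> 0 \<Longrightarrow> n - k < hweight n c"
    and k_less: "k < n"
begin

lemma subspace_code: "V.subspace C" and code_subset_words: "C \<subseteq> words n"
  using linear by (auto simp: linear_code_def)

lemma finite_code: "finite C"
  using code_subset_words finite_words finite_subset by blast

lemma obtain_code_basis:
  obtains B where "B \<subseteq> C" "V.independent B" "C \<subseteq> V.span B" "card B = k"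
  using V.basis_exists[of C] dim unfolding code_dim_def by blast

lemma card_code_ge: "CARD('a) ^ k \<le> card C"
proof -
  obtain B where "B \<subseteq> C" "V.independent B" "card B = k" by (rule obtain_code_basis)
  then show ?thesis using card_subspace_ge[OF subspace_code finite_code] by blast
qed

lemma codeword_eq_0:
  assumes "c \<in> C" "K \<subseteq> {..<n}" "k \<le> card K" "\<forall>i\<in>K. c i = 0"
  shows "c = 0"
proof (rule ccontr)
  assume "c \<noteq> 0"
  have "{i. i < n \<and> c i \<noteq> 0} \<subseteq> {..<n} - K" using assms(4) by auto
  then have "hweight n c \<le> card ({..<n} - K)" unfolding hweight_def by (intro card_mono) auto
  also have "\<dots> = n - card K" using assms(2) by (simp add: card_Diff_subset finite_subset)
  finally show False using weight_gt[OF assms(1) \<open>c \<noteq> 0\<close>] assms(3) by linarith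
qed

lemma exists_codeword_vanishing_on:
  assumes "finite L" "card L < k"
  shows "\<exists>c\<in>C. c \<noteq> 0 \<and> (\<forall>i\<in>L. c i = 0)"
proof -
  let ?restrict = "\<lambda>c::nat \<Rightarrow> 'a. (\<lambda>i. if i \<in> L then c i else 0)"
  have "CARD('a) ^ card L < CARD('a) ^ k"
    using assms(2) one_less_card_field by (intro power_strict_increasing) auto
  then have card: "card (supported_on L :: (nat \<Rightarrow> 'a) set) < card C"
    using card_code_ge card_supported_on[OF assms(1), where 'a = 'a] by simp
  have image: "?restrict ` C \<subseteq> supported_on L" by (auto simp: supported_on_def)
  have additive: "?restrict (x - y) = ?restrict x - ?restrict y" for x y by (simp add: fun_eq_iff)
  obtain c where c: "c \<in> C" "c \<noteq> 0" and restrict: "?restrict c = 0"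
    using subspace_exists_nonzero_in_kernel[OF subspace_code image
        finite_supported_on[OF assms(1)] card additive] by blast
  have "c i = 0" if "i \<in> L" for i using fun_cong[OF restrict, of i] that by simp
  with c show ?thesis by blast
qed

lemma exists_codeword_weight_le:
  assumes "0 < k"
  shows "\<exists>c\<in>C. c \<noteq> 0 \<and> hweight n c \<le> n - k + 1"
proof -
  obtain c where c: "c \<in> C" "c \<noteq> 0" "\<forall>i\<in>{..<k - 1}. c i = 0"
    using exists_codeword_vanishing_on[of "{..<k - 1}"] assms by auto
  have "hweight n c \<le> card ({..<n} - {..<k - 1})"
    unfolding hweight_def using c(3) by (intro card_mono) auto
  also have "\<dots> = n - k + 1" using assms k_less by (simp add: card_Diff_subset)
  finally show ?thesis using c(1,2) by blast
qed

lemma card_le_if_less_weights: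
  assumes "S \<subseteq> {..<n}" "\<forall>c\<in>C. c \<noteq> 0 \<longrightarrow> card S < hweight n c"
  shows "card S \<le> n - k"
proof (cases "k = 0")
  case True
  then show ?thesis using card_mono[OF _ assms(1)] by simp
next
  case False
  then obtain c where "c \<in> C" "c \<noteq> 0" "hweight n c \<le> n - k + 1"
    using exists_codeword_weight_le by blast
  then show ?thesis using assms(2) by fastforce
qed

lemma dual_codeword_eq_0:
  assumes y: "y \<in> dual_code n C" and K: "K \<subseteq> {..<n}" "card K \<le> k"
    and vanish: "\<forall>i<n. i \<notin> K \<longrightarrow> y i = 0"
  shows "y = 0"
proof (rule ccontr)
  assume "y \<noteq> 0"
  then obtain j where j: "y j \<noteq> 0" by (auto simp: fun_eq_iff)
  have "y \<in> words n" using y by (simp add: mem_dual_code_iff)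
  then have "j < n" using j by (auto simp: words_def not_less[symmetric])
  obtain K' where K': "K \<subseteq> K'" "K' \<subseteq> {..<n}" "card K' = k"
    using exists_subset_between[of K k "{..<n}"] K k_less by auto
  have "j \<in> K'" using vanish j \<open>j < n\<close> K'(1) by blast
  have "finite K'" using K'(2) finite_subset by blast
  then have "0 < k" using \<open>j \<in> K'\<close> K'(3) card_gt_0_iff by blast
  then have "card (K' - {j}) < k" using \<open>j \<in> K'\<close> K'(3) by simp
  then obtain c where c: "c \<in> C" "c \<noteq> 0" "\<forall>i\<in>K' - {j}. c i = 0"
    using exists_codeword_vanishing_on \<open>finite K'\<close> by blast
  have "dot n c y = c j * y j"
  proof (rule dot_eq_single[OF \<open>j < n\<close>])
    fix i assume "i < n" "i \<noteq> j"
    then show "c i * y i = 0" using c(3) vanish K'(1) by (cases "i \<in> K'") auto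
  qed
  moreover have "dot n c y = 0" using y c(1) by (simp add: mem_dual_code_iff)
  ultimately have "\<forall>i\<in>K'. c i = 0" using j c(3) by auto
  then show False using codeword_eq_0[OF c(1) K'(2)] K'(3) c(2) by simp
qed

lemma exists_dual_codeword_with_zero_set:
  assumes T: "T \<subseteq> {..<n}" "card T = n - k - 1"
  shows "\<exists>y\<in>dual_code n C. \<forall>i<n. y i = 0 \<longleftrightarrow> i \<in> T"
proof -
  obtain B where B: "B \<subseteq> C" "C \<subseteq> V.span B" "card B = k" by (rule obtain_code_basis)
  have "finite B" using B(1) finite_code finite_subset by blast
  define J where "J = {..<n} - T"
  have "finite T" using T(1) finite_subset by blast
  then have "finite J" "card J = k + 1"
    unfolding J_def using T k_less by (auto simp: card_Diff_subset)
  \<comment> \<open>\<open>k\<close> linear conditions on the \<open>k + 1\<close> coordinates outside \<open>T\<close>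
    have a nonzero solution.\<close>
  let ?syndrome = "\<lambda>y b. if b \<in> B then dot n b y else 0"
  have card: "card (supported_on B :: ((nat \<Rightarrow> 'a) \<Rightarrow> 'a) set)
      < card (supported_on J :: (nat \<Rightarrow> 'a) set)"
    unfolding card_supported_on[OF \<open>finite B\<close>] card_supported_on[OF \<open>finite J\<close>]
      B(3) \<open>card J = k + 1\<close>
    using one_less_card_field by (intro power_strict_increasing) auto
  have image: "?syndrome ` supported_on J \<subseteq> supported_on B" by (auto simp: supported_on_def)
  have additive: "?syndrome (x - y) = ?syndrome x - ?syndrome y" for x y
    by (simp add: fun_eq_iff dot_diff_right)
  obtain y where y: "y \<in> supported_on J" "y \<noteq> 0" and syndrome: "?syndrome y = 0"
    using subspace_exists_nonzero_in_kernel[OF subspace_supported_on image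
        finite_supported_on[OF \<open>finite B\<close>] card additive] by blast
  have "y \<in> words n" using y(1) by (auto simp: words_def supported_on_def J_def)
  moreover have "\<forall>b\<in>B. dot n b y = 0" using fun_cong[OF syndrome] by (metis zero_fun_apply)
  then have "\<forall>x\<in>C. dot n x y = 0" using B(2) dot_span_eq_0 by blast
  ultimately have yD: "y \<in> dual_code n C" by (simp add: mem_dual_code_iff)
  have "y i \<noteq> 0" if "i < n" "i \<notin> T" for i
  proof
    assume "y i = 0"
    then have "\<forall>i'<n. i' \<notin> J - {i} \<longrightarrow> y i' = 0" using y(1) by (auto simp: supported_on_def)
    moreover have "card (J - {i}) \<le> k" using \<open>card J = k + 1\<close> that by (simp add: J_def)
    moreover have "J - {i} \<subseteq> {..<n}" by (auto simp: J_def)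
    ultimately show False using dual_codeword_eq_0[OF yD, of "J - {i}"] y(2) by blast
  qed
  moreover have "y i = 0" if "i \<in> T" for i using y(1) that by (auto simp: supported_on_def J_def)
  ultimately show ?thesis using yD by blast
qed

definition zero_sets :: "nat set set" where
  "zero_sets = {T. T \<subseteq> {..<n} \<and> card T = n - k - 1}"

definition dual_word :: "nat set \<Rightarrow> nat \<Rightarrow> 'a" where
  "dual_word T = (SOME y. y \<in> dual_code n C \<and> (\<forall>i<n. y i = 0 \<longleftrightarrow> i \<in> T))"

lemma
  assumes "T \<in> zero_sets"
  shows dual_word_mem: "dual_word T \<in> dual_code n C"
    and dual_word_eq_0_iff: "i < n \<Longrightarrow> dual_word T i = 0 \<longleftrightarrow> i \<in> T"
  using someI_ex[OF exists_dual_codeword_with_zero_set[unfolded Bex_def]] assms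
  unfolding zero_sets_def dual_word_def by blast+

lemma finite_zero_sets: "finite zero_sets"
  unfolding zero_sets_def by (rule finite_subset[of _ "Pow {..<n}"]) auto

lemma card_zero_sets: "card zero_sets = n choose (n - k - 1)"
  using n_subsets[of "{..<n}" "n - k - 1"] by (simp add: zero_sets_def)

lemma insert_mem_zero_sets:
  assumes "Z \<subseteq> {..<n}" "card Z + 2 = n - k" "a < n" "a \<notin> Z"
  shows "insert a Z \<in> zero_sets"
  using assms finite_subset[OF assms(1)] by (auto simp: zero_sets_def)

lemma in_span_two_dual_words:
  assumes y: "y \<in> dual_code n C" and Z: "Z \<subseteq> {..<n}" "card Z + 2 = n - k" "\<forall>i\<in>Z. y i = 0"
    and ab: "a < n" "b < n" "a \<notin> Z" "b \<notin> Z" "a \<noteq> b"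
  shows "y \<in> V.span {dual_word (insert a Z), dual_word (insert b Z)}"
proof -
  define ya yb where "ya = dual_word (insert a Z)" and "yb = dual_word (insert b Z)"
  have Ta: "insert a Z \<in> zero_sets" and Tb: "insert b Z \<in> zero_sets"
    using Z ab by (auto intro: insert_mem_zero_sets)
  \<comment> \<open>\<open>z\<close> vanishes on the \<open>n - k\<close> coordinates \<open>insert a (insert b Z)\<close>, hence is \<open>0\<close>.\<close>
  define z where "z = y - scl (y b / ya b) ya - scl (y a / yb a) yb"
  have "z \<in> dual_code n C" unfolding z_def ya_def yb_def
    using y dual_word_mem[OF Ta] dual_word_mem[OF Tb] subspace_dual_code
    by (intro V.subspace_diff V.subspace_scale) auto
  moreover have "z i = 0" if "i < n" "i \<in> insert a (insert b Z)" for i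
  proof -
    have "ya i = 0 \<longleftrightarrow> i \<in> insert a Z" "yb i = 0 \<longleftrightarrow> i \<in> insert b Z"
      unfolding ya_def yb_def using dual_word_eq_0_iff[OF Ta] dual_word_eq_0_iff[OF Tb] that(1)
      by blast+
    moreover have "ya b \<noteq> 0" "yb a \<noteq> 0"
      unfolding ya_def yb_def using dual_word_eq_0_iff[OF Ta] dual_word_eq_0_iff[OF Tb] ab by auto
    ultimately show ?thesis using that(2) Z(3) by (auto simp: z_def scl_def)
  qed
  moreover have "card ({..<n} - insert a (insert b Z)) = k"
    using Z ab finite_subset[OF Z(1)] by (subst card_Diff_subset) auto
  ultimately have "z = 0" using dual_codeword_eq_0[of z "{..<n} - insert a (insert b Z)"] by auto
  then have "y = scl (y b / ya b) ya + scl (y a / yb a) yb" by (simp add: z_def algebra_simps)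
  also have "\<dots> \<in> V.span {ya, yb}" by (intro V.span_add V.span_scale V.span_base) auto
  finally show ?thesis by (simp add: ya_def yb_def)
qed

lemma dual_code_subset_span_dual_words: "dual_code n C \<subseteq> V.span (dual_word ` zero_sets)"
proof
  fix y assume y: "y \<in> dual_code n C"
  define P where "P = {..<n - k}"
  define w where "w p = dual_word (P - {p})" for p
  have P: "P - {p} \<in> zero_sets" if "p \<in> P" for p
    using that k_less by (auto simp: P_def zero_sets_def)
  define z where "z = y - (\<Sum>p\<in>P. scl (y p / w p p) (w p))"
  have "z \<in> dual_code n C" unfolding z_def w_def
    using y subspace_dual_code dual_word_mem[OF P]
    by (intro V.subspace_diff V.subspace_sum V.subspace_scale) auto
  moreover have "z i = 0" if "i \<in> P" for i
  proof -
    have "i < n" using that k_less by (simp add: P_def)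
    have w: "w p i = 0 \<longleftrightarrow> p \<noteq> i" if "p \<in> P" for p
      unfolding w_def using dual_word_eq_0_iff[OF P[OF that] \<open>i < n\<close>] \<open>i \<in> P\<close> by auto
    have "(\<Sum>p\<in>P. scl (y p / w p p) (w p)) i = (\<Sum>p\<in>P. y p / w p p * w p i)"
      by (simp add: sum_apply scl_def)
    also have "\<dots> = y i / w i i * w i i"
    proof -
      have "(\<Sum>p\<in>P - {i}. y p / w p p * w p i) = 0" using w by (intro sum.neutral) auto
      moreover have "finite P" by (simp add: P_def)
      ultimately show ?thesis using sum.remove[OF _ that, of "\<lambda>p. y p / w p p * w p i"] by simp
    qed
    also have "\<dots> = y i" using w[OF that] by simp
    finally show ?thesis by (simp add: z_def)
  qed
  moreover have "card ({..<n} - P) \<le> k" by (simp add: P_def)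
  ultimately have "z = 0" by (intro dual_codeword_eq_0[of z "{..<n} - P"]) auto
  then have "y = (\<Sum>p\<in>P. scl (y p / w p p) (w p))" by (simp add: z_def)
  also have "\<dots> \<in> V.span (dual_word ` zero_sets)"
    using P unfolding w_def by (intro V.span_sum V.span_scale V.span_base) auto
  finally show "y \<in> V.span (dual_word ` zero_sets)" .
qed

lemma nonzero_dual_word_on:
  assumes "T \<in> zero_sets" "S \<subseteq> {..<n}"
  shows "{i \<in> S. dual_word T i \<noteq> 0} = S - T"
  using dual_word_eq_0_iff[OF assms(1)] assms(2) by auto

end

section \<open>Deleting the rows indexed by constant-weight codes\<close>

locale mds_code_removal = mds_code C n k for C :: "(nat \<Rightarrow> 'a::{field,finite}) set" and n k +
  fixes A :: "nat \<Rightarrow> nat set set" and m :: nat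
  assumes codes: "\<And>i. i < m \<Longrightarrow> cw_code n (n - k - 1) (A i)"
    and m_le: "m \<le> k" and m_less: "m < n - k"
begin

definition kept_zero_sets :: "nat set set" where
  "kept_zero_sets = zero_sets - (\<Union>i<m. A i)"

lemma card_kept_zero_sets: "card kept_zero_sets = (n choose (n - k - 1)) - card (\<Union>i<m. A i)"
proof -
  have "(\<Union>i<m. A i) \<subseteq> zero_sets" using codes by (auto simp: cw_code_def zero_sets_def)
  then show ?thesis
    unfolding kept_zero_sets_def using finite_zero_sets card_zero_sets
    by (simp add: card_Diff_subset finite_subset)
qed

lemma finite_kept_zero_sets: "finite kept_zero_sets"
  using finite_zero_sets by (simp add: kept_zero_sets_def)

lemma card_kept_inserts_ge:
  assumes Z: "Z \<subseteq> {..<n}" "card Z + 2 = n - k" and X: "X \<subseteq> {..<n} - Z" "m + j \<le> card X"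
  shows "j \<le> card {a \<in> X. insert a Z \<in> kept_zero_sets}"
proof -
  let ?ins = "\<lambda>a. insert a Z"
  have inj: "inj_on ?ins X" using X(1) by (intro inj_onI) auto
  have "finite X" using X(1) finite_subset by blast
  then have "j \<le> card (?ins ` X - (\<Union>i<m. A i))"
    using card_Diff_UN_cw_codes_ge[OF codes pairwise_near_insert] X(2) inj by (simp add: card_image)
  also have "?ins ` X - (\<Union>i<m. A i) = ?ins ` {a \<in> X. insert a Z \<in> kept_zero_sets}"
    using insert_mem_zero_sets[OF Z] X(1) by (auto simp: kept_zero_sets_def)
  also have "card \<dots> = card {a \<in> X. insert a Z \<in> kept_zero_sets}"
    using inj by (intro card_image) (auto intro: inj_on_subset)
  finally show ?thesis .
qed

lemma dual_word_in_span_kept: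
  assumes T: "T \<in> zero_sets"
  shows "dual_word T \<in> V.span (dual_word ` kept_zero_sets)"
proof (cases "T \<in> kept_zero_sets")
  case True
  then show ?thesis by (intro V.span_base) auto
next
  case False
  then have "0 < m" using T by (auto simp: kept_zero_sets_def)
  have "T \<subseteq> {..<n}" "card T = n - k - 1" "finite T"
    using T finite_subset by (auto simp: zero_sets_def)
  then obtain t where "t \<in> T" using \<open>0 < m\<close> m_less by fastforce
  define Z where "Z = T - {t}"
  have Z: "Z \<subseteq> {..<n}" "card Z + 2 = n - k"
    using \<open>T \<subseteq> {..<n}\<close> \<open>card T = n - k - 1\<close> \<open>finite T\<close> \<open>t \<in> T\<close> \<open>0 < m\<close> m_less
    by (auto simp: Z_def)
  then have "card ({..<n} - Z) = k + 2"
    using finite_subset[OF Z(1) finite_lessThan] by (simp add: card_Diff_subset)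
  then have "2 \<le> card {a \<in> {..<n} - Z. insert a Z \<in> kept_zero_sets}"
    using card_kept_inserts_ge[OF Z, of "{..<n} - Z" 2] m_le by simp
  then obtain P where P: "P \<subseteq> {a \<in> {..<n} - Z. insert a Z \<in> kept_zero_sets}" "card P = 2"
    by (rule obtain_subset_with_card_n)
  then obtain a b where "P = {a, b}" "a \<noteq> b" by (meson card_2_iff)
  then have ab: "a < n" "b < n" "a \<notin> Z" "b \<notin> Z" "a \<noteq> b"
    and kept: "insert a Z \<in> kept_zero_sets" "insert b Z \<in> kept_zero_sets" using P(1) by auto
  have "\<forall>i\<in>Z. dual_word T i = 0" using dual_word_eq_0_iff[OF T] Z by (auto simp: Z_def)
  then have in_span2: "dual_word T \<in> V.span {dual_word (insert a Z), dual_word (insert b Z)}"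
    using in_span_two_dual_words[OF dual_word_mem[OF T] Z] ab by blast
  have "V.span {dual_word (insert a Z), dual_word (insert b Z)}
      \<subseteq> V.span (dual_word ` kept_zero_sets)"
    using kept by (intro V.span_mono) auto
  then show ?thesis using in_span2 by (rule subsetD)
qed

lemma span_kept_dual_words: "V.span (dual_word ` kept_zero_sets) = dual_code n C"
proof
  show "V.span (dual_word ` kept_zero_sets) \<subseteq> dual_code n C"
    using dual_word_mem subspace_dual_code by (intro V.span_minimal) (auto simp: kept_zero_sets_def)
  have "V.span (dual_word ` zero_sets) \<subseteq> V.span (dual_word ` kept_zero_sets)"
    using dual_word_in_span_kept by (intro V.span_minimal) auto
  then show "dual_code n C \<subseteq> V.span (dual_word ` kept_zero_sets)"
    using dual_code_subset_span_dual_words by blast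
qed

lemma exists_kept_missing_one_if_card_eq:
  assumes S: "S \<subseteq> {..<n}" "card S = n - k"
  shows "\<exists>T\<in>kept_zero_sets. \<exists>i. S - T = {i}"
proof -
  have "finite S" using S(1) finite_subset by blast
  define F where "F = (\<lambda>i. S - {i}) ` S"
  have "inj_on (\<lambda>i. S - {i}) S" by (rule inj_onI) auto
  then have "card F = n - k" using S(2) by (simp add: F_def card_image)
  then have "1 \<le> card (F - (\<Union>i<m. A i))"
    using card_Diff_UN_cw_codes_ge[OF codes pairwise_near_remove] m_less \<open>finite S\<close>
    by (simp add: F_def)
  then have "F - (\<Union>i<m. A i) \<noteq> {}" by force
  then obtain i where "i \<in> S" "S - {i} \<notin> (\<Union>i<m. A i)" unfolding F_def by blast
  moreover have "S - {i} \<in> zero_sets" using S \<open>i \<in> S\<close> \<open>finite S\<close> by (auto simp: zero_sets_def)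
  ultimately show ?thesis
    using \<open>i \<in> S\<close> by (intro bexI[of _ "S - {i}"]) (auto simp: kept_zero_sets_def)
qed

lemma exists_kept_missing_one_if_card_less:
  assumes S: "S \<subseteq> {..<n}" "S \<noteq> {}" "card S < n - k"
  shows "\<exists>T\<in>kept_zero_sets. \<exists>i. S - T = {i}"
proof -
  have "finite S" using S(1) finite_subset by blast
  obtain i where "i \<in> S" using S(2) by blast
  have "card (S - {i}) \<le> n - k - 2" using S(3) \<open>i \<in> S\<close> \<open>finite S\<close> by simp
  moreover have "n - k - 2 \<le> card ({..<n} - {i})" using \<open>i \<in> S\<close> S(1) by auto
  ultimately obtain Z where Z: "S - {i} \<subseteq> Z" "Z \<subseteq> {..<n} - {i}" "card Z = n - k - 2"
    using exists_subset_between[of "S - {i}" "n - k - 2" "{..<n} - {i}"] S(1) by auto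
  have "0 < card S" using \<open>finite S\<close> S(2) by (simp add: card_gt_0_iff)
  then have Z': "Z \<subseteq> {..<n}" "card Z + 2 = n - k" using Z(2,3) S(3) by auto
  have "i \<in> {..<n} - Z" using Z(2) \<open>i \<in> S\<close> S(1) by auto
  then have "card ({..<n} - Z - {i}) = k + 1"
    using Z' finite_subset[OF Z'(1) finite_lessThan] by (simp add: card_Diff_subset)
  then have "1 \<le> card {a \<in> {..<n} - Z - {i}. insert a Z \<in> kept_zero_sets}"
    using card_kept_inserts_ge[OF Z', of "{..<n} - Z - {i}"] m_le by auto
  then obtain a where a: "a \<in> {..<n} - Z - {i}" "insert a Z \<in> kept_zero_sets"
    by (metis (no_types, lifting) Collect_empty_eq card.empty not_one_le_zero)
  have "S - insert a Z = {i}" using Z a \<open>i \<in> S\<close> by auto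
  with a(2) show ?thesis by blast
qed

lemma exists_kept_missing_one:
  assumes "S \<subseteq> {..<n}" "S \<noteq> {}" "card S \<le> n - k"
  shows "\<exists>T\<in>kept_zero_sets. \<exists>i. S - T = {i}"
  using assms exists_kept_missing_one_if_card_eq exists_kept_missing_one_if_card_less
  by (cases "card S = n - k") auto

lemma stopping_redundancy_le_card_kept: "stopping_redundancy n C \<le> card kept_zero_sets"
proof -
  have "stopping_redundancy n C \<le> card (dual_word ` kept_zero_sets)"
  proof (rule stopping_redundancy_le_card[OF code_subset_words _ span_kept_dual_words])
    show "finite (dual_word ` kept_zero_sets)" using finite_kept_zero_sets by simp
  next
    fix S assume S: "S \<subseteq> {..<n}" "S \<noteq> {}" "\<forall>c\<in>C. c \<noteq> 0 \<longrightarrow> card S < hweight n c"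
    then obtain T i where T: "T \<in> kept_zero_sets" "S - T = {i}"
      using exists_kept_missing_one card_le_if_less_weights by meson
    then have "card {i \<in> S. dual_word T i \<noteq> 0} = 1"
      using nonzero_dual_word_on[OF _ S(1)] by (simp add: kept_zero_sets_def)
    then show "\<exists>y\<in>dual_word ` kept_zero_sets. card {i \<in> S. y i \<noteq> 0} = 1" using T(1) by blast
  qed
  also have "\<dots> \<le> card kept_zero_sets" using finite_kept_zero_sets by (rule card_image_le)
  finally show ?thesis .
qed

end

theorem theorem18:
  fixes C :: "(nat \<Rightarrow> 'a::{field,finite}) set" and n k d :: nat
  assumes "linear_code n C"
    and "code_dim C = k"
    and "min_distance n C = d"
    and "d = n - k + 1"
    and "d \<ge> 3"
  shows "stopping_redundancy n C \<le> (n choose (d - 2)) - U n (d - 2) (min k (n - k - 1))"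
proof -
  interpret mds_code C n k
  proof
    show "n - k < hweight n c" if "c \<in> C" "c \<noteq> 0" for c
      using min_distance_le_hweight[OF that, where n = n] assms(3,4) by simp
  qed (use assms in auto)
  define m where "m = min k (n - k - 1)"
  obtain A where A: "\<forall>i<m. cw_code n (n - k - 1) (A i)"
    and U_eq: "U n (n - k - 1) m = card (\<Union>i<m. A i)"
    using U_attained by blast
  interpret mds_code_removal C n k A m
    using A assms(4,5) by unfold_locales (auto simp: m_def)
  have "stopping_redundancy n C \<le> card kept_zero_sets" by (rule stopping_redundancy_le_card_kept)
  also have "\<dots> = (n choose (d - 2)) - U n (d - 2) (min k (n - k - 1))"
    using card_kept_zero_sets U_eq assms(4) by (simp add: m_def)
  finally show ?thesis .
qed

end
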